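(* Let $\alpha\in(0,1)$, $\lambda>0$ and $p_0\ge0$ be constants. If $w\in H^1(0,T)$ satisfies $$\partial_tw(t)+p_0\partial_t^\alpha w(t)+\lambda w(t)\le0\quad(0<t<T),\qquad w(0)\le0,$$ then $w(t)\le0$ for $0<t\le T$.
   Context: $\partial_t^\alpha\varphi(t)=\frac{1}{\Gamma(1-\alpha)}\int_0^t(t-\tau)^{-\alpha}\varphi'(\tau)d\tau$ is the Caputo derivative. *)

theory Defs
  imports "HOL-Analysis.Analysis"
begin

definition H1_with_deriv :: "real \<Rightarrow> (real \<Rightarrow> real) \<Rightarrow> (real \<Rightarrow> real) \<Rightarrow> bool" where
  "H1_with_deriv T w g \<longleftrightarrow>
     set_borel_measurable lborel {0..T} g \<and>
     set_integrable lborel {0..T} (\<lambda>t. (g t)\<^sup>2) \<and>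
     (\<forall>t\<in>{0..T}. w t = w 0 + (LBINT s=0..t. g s))"

text \<open>Caputo derivative of order alpha of a function whose derivative is g:
  1/Gamma(1-alpha) * integral over (0,t) of (t-tau)^(-alpha) g(tau).\<close>
definition caputo :: "real \<Rightarrow> (real \<Rightarrow> real) \<Rightarrow> real \<Rightarrow> real" where
  "caputo \<alpha> g t = 1 / Gamma (1 - \<alpha>) * (LBINT \<tau>=0..t. (t - \<tau>) powr (-\<alpha>) * g \<tau>)"

end

theory Submission
  imports Defs
begin

text \<open>Integrating the inequality over \<open>(0,t)\<close> and exchanging the order of integration in the
  Caputo term shows that
  \<open>F(t) = w(t) + p0/\<Gamma>(1-\<alpha>) \<integral>\<^sub>0\<^sup>t (t-\<sigma>)\<^sup>-\<^sup>\<alpha> (w(\<sigma>) - w(0)) d\<sigma> + lam \<integral>\<^sub>0\<^sup>t w\<close>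
  is nonincreasing. If \<open>w\<close> were positive somewhere, let \<open>t1 > 0\<close> be a maximum point of \<open>w\<close>.
  Comparing \<open>F(t1) \<le> F(s)\<close> for \<open>s\<close> just below \<open>t1\<close>, the memory term is bounded by the
  singular integral of the deficit \<open>w(t1) - w\<close> over \<open>(s,t1)\<close>, because the kernel
  \<open>(t-\<sigma>)\<^sup>-\<^sup>\<alpha>\<close> decreases in \<open>t\<close>. On a short interval \<open>[t1-\<delta>,t1]\<close> where \<open>w > 0\<close>, the maximal
  deficit \<open>m\<close> then satisfies \<open>m \<le> q m\<close> with \<open>q < 1\<close>, so \<open>w\<close> is constant there. Then the
  bound for \<open>s = t1-\<delta>\<close> has vanishing right-hand side, while its left-hand side contains
  \<open>lam \<integral>\<^bsub>t1-\<delta>\<^esub>\<^bsup>t1\<^esup> w = lam \<delta> w(t1) > 0\<close>.\<close>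

lemma Ioo_integral_eq_integral:
  fixes f :: "real \<Rightarrow> real"
  assumes "set_integrable lborel {a..b} f"
  shows "integrable lborel (\<lambda>x. indicator {a<..<b} x * f x)"
    and "(LINT x|lborel. indicator {a<..<b} x * f x) = integral {a..b} f"
proof -
  have f_int: "integrable lborel (\<lambda>x. indicator {a..b} x * f x)"
    using assms unfolding set_integrable_def by simp
  have Ioo_eq: "(\<lambda>x. indicator {a<..<b} x * f x) = (\<lambda>x. indicator {a<..<b} x * (indicator {a..b} x * f x))"
    by (auto simp: indicator_def fun_eq_iff)
  show Ioo_int: "integrable lborel (\<lambda>x. indicator {a<..<b} x * f x)"
    unfolding Ioo_eq using integrable_mult_indicator[OF _ f_int, of "{a<..<b}"] by simp
  have "AE x in lborel. indicator {a<..<b} x * f x = indicator {a..b} x * f x"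
    using AE_lborel_singleton[of a] AE_lborel_singleton[of b]
    by eventually_elim (auto simp: indicator_def)
  then have "(LINT x|lborel. indicator {a<..<b} x * f x) = (LINT x|lborel. indicator {a..b} x * f x)"
    using Ioo_int f_int by (intro integral_cong_AE) (auto dest: borel_measurable_integrable)
  also have "\<dots> = integral {a..b} f"
    using set_borel_integral_eq_integral(2)[OF assms] unfolding set_lebesgue_integral_def by simp
  finally show "(LINT x|lborel. indicator {a<..<b} x * f x) = integral {a..b} f" .
qed

lemma Ioo_powr_kernel:
  fixes \<alpha> c :: real
  assumes "\<alpha> < 1" "0 \<le> c"
  shows "integrable lborel (\<lambda>x. indicator {0<..<c} x * x powr (-\<alpha>))"
    and "(LINT x|lborel. indicator {0<..<c} x * x powr (-\<alpha>)) = c powr (1-\<alpha>) / (1-\<alpha>)"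
proof -
  have h: "((\<lambda>x. x powr (-\<alpha>)) has_integral (c powr (1-\<alpha>) / (1-\<alpha>))) {0..c}"
    using has_integral_powr_from_0[of "-\<alpha>" c] assms by simp
  have "(\<lambda>x. x powr (-\<alpha>)) absolutely_integrable_on {0..c}"
    by (rule nonnegative_absolutely_integrable_1) (use h in \<open>auto simp: integrable_on_def\<close>)
  then have si: "set_integrable lborel {0..c} (\<lambda>x. x powr (-\<alpha>))"
    unfolding absolutely_integrable_on_def set_integrable_def
    by (subst (asm) integrable_completion) auto
  show "integrable lborel (\<lambda>x. indicator {0<..<c} x * x powr (-\<alpha>))"
    using Ioo_integral_eq_integral(1)[OF si] .
  show "(LINT x|lborel. indicator {0<..<c} x * x powr (-\<alpha>)) = c powr (1-\<alpha>) / (1-\<alpha>)"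
    using Ioo_integral_eq_integral(2)[OF si] integral_unique[OF h] by simp
qed

lemma Ioo_powr_kernel_left:
  fixes \<alpha> a b :: real
  assumes "\<alpha> < 1" "a \<le> b"
  shows "integrable lborel (\<lambda>x. indicator {a<..<b} x * (x - a) powr (-\<alpha>))"
    and "(LINT x|lborel. indicator {a<..<b} x * (x - a) powr (-\<alpha>)) = (b - a) powr (1-\<alpha>) / (1-\<alpha>)"
proof -
  note k = Ioo_powr_kernel[of \<alpha> "b - a"]
  have e: "(\<lambda>x. indicator {0<..<b-a} (-a + 1 * x) * (-a + 1 * x) powr (-\<alpha>))
      = (\<lambda>x. indicator {a<..<b} x * (x - a) powr (-\<alpha>))"
    by (auto simp: indicator_def fun_eq_iff)
  show "integrable lborel (\<lambda>x. indicator {a<..<b} x * (x - a) powr (-\<alpha>))"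
    using lborel_integrable_real_affine[OF k(1), of 1 "-a"] assms e by simp
  show "(LINT x|lborel. indicator {a<..<b} x * (x - a) powr (-\<alpha>)) = (b - a) powr (1-\<alpha>) / (1-\<alpha>)"
    using lborel_integral_real_affine[of 1 "\<lambda>x. indicator {0<..<b-a} x * x powr (-\<alpha>)" "-a"] k(2) assms e
    by simp
qed

lemma Ioo_powr_kernel_right:
  fixes \<alpha> a b :: real
  assumes "\<alpha> < 1" "a \<le> b"
  shows "integrable lborel (\<lambda>x. indicator {a<..<b} x * (b - x) powr (-\<alpha>))"
    and "(LINT x|lborel. indicator {a<..<b} x * (b - x) powr (-\<alpha>)) = (b - a) powr (1-\<alpha>) / (1-\<alpha>)"
proof -
  note k = Ioo_powr_kernel[of \<alpha> "b - a"]
  have e: "(\<lambda>x. indicator {0<..<b-a} (b + (-1) * x) * (b + (-1) * x) powr (-\<alpha>))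
      = (\<lambda>x. indicator {a<..<b} x * (b - x) powr (-\<alpha>))"
    by (auto simp: indicator_def fun_eq_iff)
  show "integrable lborel (\<lambda>x. indicator {a<..<b} x * (b - x) powr (-\<alpha>))"
    using lborel_integrable_real_affine[OF k(1), of "-1" "b"] assms e by simp
  show "(LINT x|lborel. indicator {a<..<b} x * (b - x) powr (-\<alpha>)) = (b - a) powr (1-\<alpha>) / (1-\<alpha>)"
    using lborel_integral_real_affine[of "-1" "\<lambda>x. indicator {0<..<b-a} x * x powr (-\<alpha>)" "b"] k(2) assms e
    by simp
qed

lemma Fubini_bounded_kernel:
  fixes f :: "real \<Rightarrow> real" and k :: "real \<Rightarrow> real \<Rightarrow> real" and B :: real
  assumes [measurable]: "f \<in> borel_measurable lborel" and f_int: "integrable lborel f"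
    and k_meas: "(\<lambda>p. k (fst p) (snd p)) \<in> borel_measurable (lborel \<Otimes>\<^sub>M lborel)"
    and k_nonneg: "\<And>\<tau> x. 0 \<le> k \<tau> x" and k_int: "\<And>\<tau>. integrable lborel (k \<tau>)"
    and k_bound: "\<And>\<tau>. (LINT x|lborel. k \<tau> x) \<le> B"
  shows "integrable lborel (\<lambda>x. LINT \<tau>|lborel. f \<tau> * k \<tau> x)"
    and "(LINT x|lborel. LINT \<tau>|lborel. f \<tau> * k \<tau> x) = (LINT \<tau>|lborel. f \<tau> * (LINT x|lborel. k \<tau> x))"
proof -
  have [measurable]: "case_prod k \<in> borel_measurable (lborel \<Otimes>\<^sub>M lborel)"
    using k_meas by (simp add: case_prod_beta')
  have norm_eq: "(LINT x|lborel. norm (f \<tau> * k \<tau> x)) = \<bar>f \<tau>\<bar> * (LINT x|lborel. k \<tau> x)" for \<tau>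
    using k_nonneg by (auto simp: abs_mult)
  have "0 \<le> B"
    using k_bound[of 0] Bochner_Integration.integral_nonneg[of lborel "k 0"] k_nonneg by (meson order_trans)
  have "integrable lborel (\<lambda>\<tau>. LINT x|lborel. norm (f \<tau> * k \<tau> x))"
  proof (rule Bochner_Integration.integrable_bound[where f="\<lambda>\<tau>. B * f \<tau>"])
    show "integrable lborel (\<lambda>\<tau>. B * f \<tau>)"
      using f_int by simp
    show "(\<lambda>\<tau>. LINT x|lborel. norm (f \<tau> * k \<tau> x)) \<in> borel_measurable lborel"
      unfolding norm_eq by measurable
    show "AE \<tau> in lborel. norm (LINT x|lborel. norm (f \<tau> * k \<tau> x)) \<le> norm (B * f \<tau>)"
    proof (intro AE_I2)
      fix \<tau>
      have "\<bar>f \<tau>\<bar> * (LINT x|lborel. k \<tau> x) \<le> \<bar>f \<tau>\<bar> * B"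
        using k_bound[of \<tau>] by (simp add: mult_left_mono)
      moreover have "0 \<le> (LINT x|lborel. k \<tau> x)"
        using k_nonneg by (simp add: Bochner_Integration.integral_nonneg)
      ultimately show "norm (LINT x|lborel. norm (f \<tau> * k \<tau> x)) \<le> norm (B * f \<tau>)"
        unfolding norm_eq using \<open>0 \<le> B\<close> by (simp add: abs_mult mult.commute)
    qed
  qed
  then have I: "integrable (lborel \<Otimes>\<^sub>M lborel) (\<lambda>(\<tau>, x). f \<tau> * k \<tau> x)"
    using k_int by (intro lborel_pair.Fubini_integrable) (auto simp: case_prod_beta')
  show "integrable lborel (\<lambda>x. LINT \<tau>|lborel. f \<tau> * k \<tau> x)"
    using lborel_pair.integrable_snd[OF I] .
  show "(LINT x|lborel. LINT \<tau>|lborel. f \<tau> * k \<tau> x) = (LINT \<tau>|lborel. f \<tau> * (LINT x|lborel. k \<tau> x))"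
    using lborel_pair.Fubini_integral[OF I] by simp
qed

text \<open>\<open>abel_integral \<alpha> f a t\<close> is \<open>\<Gamma>(1-\<alpha>)\<close> times the Riemann--Liouville integral of order
  \<open>1-\<alpha>\<close> of \<open>f\<close> over \<open>(a,t)\<close>; the Caputo derivative is its value on the derivative, divided by
  \<open>\<Gamma>(1-\<alpha>)\<close>.\<close>
definition abel_integral :: "real \<Rightarrow> (real \<Rightarrow> real) \<Rightarrow> real \<Rightarrow> real \<Rightarrow> real" where
  "abel_integral \<alpha> f a t = (LINT \<tau>|lborel. indicator {a<..<t} \<tau> * ((t - \<tau>) powr (-\<alpha>) * f \<tau>))"

lemma abel_integral_cong:
  assumes "\<And>\<tau>. a < \<tau> \<Longrightarrow> \<tau> < t \<Longrightarrow> f \<tau> = h \<tau>"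
  shows "abel_integral \<alpha> f a t = abel_integral \<alpha> h a t"
  unfolding abel_integral_def using assms by (intro Bochner_Integration.integral_cong) (auto simp: indicator_def)

lemma Fubini_triangle:
  fixes f :: "real \<Rightarrow> real" and h :: "real \<Rightarrow> real \<Rightarrow> real" and t B :: real
  assumes [measurable]: "f \<in> borel_measurable lborel" and f_int: "integrable lborel f"
    and [measurable]: "(\<lambda>p. h (fst p) (snd p)) \<in> borel_measurable (lborel \<Otimes>\<^sub>M lborel)"
    and h_nonneg: "\<And>\<tau> u. 0 \<le> h \<tau> u"
    and h_int: "\<And>\<tau>. 0 < \<tau> \<Longrightarrow> \<tau> < t \<Longrightarrow> integrable lborel (\<lambda>u. indicator {\<tau><..<t} u * h \<tau> u)"
    and h_bound: "\<And>\<tau>. 0 < \<tau> \<Longrightarrow> \<tau> < t \<Longrightarrow> (LINT u|lborel. indicator {\<tau><..<t} u * h \<tau> u) \<le> B"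
  shows "integrable lborel (\<lambda>u. LINT \<tau>|lborel. indicator {0<..<t} u * indicator {0<..<u} \<tau> * h \<tau> u * f \<tau>)"
    and "(LINT u|lborel. LINT \<tau>|lborel. indicator {0<..<t} u * indicator {0<..<u} \<tau> * h \<tau> u * f \<tau>)
       = (LINT \<tau>|lborel. indicator {0<..<t} \<tau> * (LINT u|lborel. indicator {\<tau><..<t} u * h \<tau> u) * f \<tau>)"
proof -
  define k where "k \<tau> u = (if 0 < \<tau> \<and> \<tau> < u \<and> u < t then h \<tau> u else 0)" for \<tau> u
  have k_eq: "k \<tau> = (\<lambda>u. indicator {0<..<t} \<tau> * (indicator {\<tau><..<t} u * h \<tau> u))" for \<tau>
    by (auto simp: k_def indicator_def fun_eq_iff)
  have k_meas: "(\<lambda>p. k (fst p) (snd p)) \<in> borel_measurable (lborel \<Otimes>\<^sub>M lborel)"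
    unfolding k_def by measurable
  have k_nonneg: "0 \<le> k \<tau> u" for \<tau> u
    using h_nonneg by (simp add: k_def)
  have k_int: "integrable lborel (k \<tau>)" for \<tau>
    using h_int[of \<tau>] by (cases "\<tau> \<in> {0<..<t}") (simp_all add: k_eq)
  have k_bound: "(LINT u|lborel. k \<tau> u) \<le> max 0 B" for \<tau>
    using h_bound[of \<tau>] by (cases "\<tau> \<in> {0<..<t}") (simp_all add: k_eq)
  note F = Fubini_bounded_kernel[OF assms(1,2) k_meas k_nonneg k_int k_bound]
  have inner_eq: "(\<lambda>u. LINT \<tau>|lborel. f \<tau> * k \<tau> u)
      = (\<lambda>u. LINT \<tau>|lborel. indicator {0<..<t} u * indicator {0<..<u} \<tau> * h \<tau> u * f \<tau>)"
    by (intro ext Bochner_Integration.integral_cong) (auto simp: k_def indicator_def)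
  have outer_eq: "(LINT \<tau>|lborel. f \<tau> * (LINT u|lborel. k \<tau> u))
      = (LINT \<tau>|lborel. indicator {0<..<t} \<tau> * (LINT u|lborel. indicator {\<tau><..<t} u * h \<tau> u) * f \<tau>)"
    by (intro Bochner_Integration.integral_cong) (auto simp: k_eq)
  show "integrable lborel (\<lambda>u. LINT \<tau>|lborel. indicator {0<..<t} u * indicator {0<..<u} \<tau> * h \<tau> u * f \<tau>)"
    using F(1) unfolding inner_eq .
  show "(LINT u|lborel. LINT \<tau>|lborel. indicator {0<..<t} u * indicator {0<..<u} \<tau> * h \<tau> u * f \<tau>)
       = (LINT \<tau>|lborel. indicator {0<..<t} \<tau> * (LINT u|lborel. indicator {\<tau><..<t} u * h \<tau> u) * f \<tau>)"
    using F(2) unfolding inner_eq outer_eq .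
qed

text \<open>Both sides equal \<open>\<integral>\<^sub>0\<^sup>t f(\<tau>) (t-\<tau>)\<^sup>1\<^sup>-\<^sup>\<alpha>/(1-\<alpha>) d\<tau>\<close>, by Fubini over the triangle
  \<open>0 < \<tau> < u < t\<close>.\<close>
lemma integral_abel_integral:
  fixes f :: "real \<Rightarrow> real"
  assumes "\<alpha> < 1" "0 \<le> t" and [measurable]: "f \<in> borel_measurable lborel" and "integrable lborel f"
  shows "integrable lborel (\<lambda>u. indicator {0<..<t} u * abel_integral \<alpha> f 0 u)"
    and "(LINT u|lborel. indicator {0<..<t} u * abel_integral \<alpha> f 0 u)
       = abel_integral \<alpha> (\<lambda>\<sigma>. LINT \<tau>|lborel. indicator {0<..<\<sigma>} \<tau> * f \<tau>) 0 t"
proof -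
  have bound: "(t - \<tau>) powr (1-\<alpha>) / (1-\<alpha>) \<le> t powr (1-\<alpha>) / (1-\<alpha>)" if "0 < \<tau>" "\<tau> < t" for \<tau>
    using assms that by (intro divide_right_mono powr_mono2) auto
  have mass_left: "(LINT u|lborel. indicator {\<tau><..<t} u * (u - \<tau>) powr (-\<alpha>)) \<le> t powr (1-\<alpha>) / (1-\<alpha>)"
    and mass_right: "(LINT u|lborel. indicator {\<tau><..<t} u * (t - u) powr (-\<alpha>)) \<le> t powr (1-\<alpha>) / (1-\<alpha>)"
    if "0 < \<tau>" "\<tau> < t" for \<tau>
    using bound[OF that] that Ioo_powr_kernel_left(2)[OF assms(1)] Ioo_powr_kernel_right(2)[OF assms(1)] by simp_all
  have meas_left: "(\<lambda>p. (snd p - fst p) powr (-\<alpha>)) \<in> borel_measurable (lborel \<Otimes>\<^sub>M lborel)"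
    and meas_right: "(\<lambda>p::real \<times> real. (t - snd p) powr (-\<alpha>)) \<in> borel_measurable (lborel \<Otimes>\<^sub>M lborel)"
    by measurable
  note L = Fubini_triangle[OF assms(3,4) meas_left powr_ge_zero Ioo_powr_kernel_left(1)[OF assms(1)] mass_left]
  note R = Fubini_triangle[OF assms(3,4) meas_right powr_ge_zero Ioo_powr_kernel_right(1)[OF assms(1)] mass_right]
  have eq_left: "(\<lambda>u. LINT \<tau>|lborel. indicator {0<..<t} u * indicator {0<..<u} \<tau> * (u - \<tau>) powr (-\<alpha>) * f \<tau>)
      = (\<lambda>u. indicator {0<..<t} u * abel_integral \<alpha> f 0 u)"
    by (simp add: abel_integral_def mult.assoc)
  have eq_right: "(LINT u|lborel. LINT \<tau>|lborel. indicator {0<..<t} u * indicator {0<..<u} \<tau> * (t - u) powr (-\<alpha>) * f \<tau>)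
      = abel_integral \<alpha> (\<lambda>\<sigma>. LINT \<tau>|lborel. indicator {0<..<\<sigma>} \<tau> * f \<tau>) 0 t"
    unfolding abel_integral_def
  proof (intro Bochner_Integration.integral_cong refl)
    fix u
    show "(LINT \<tau>|lborel. indicator {0<..<t} u * indicator {0<..<u} \<tau> * (t - u) powr (-\<alpha>) * f \<tau>)
        = indicator {0<..<t} u * ((t - u) powr (-\<alpha>) * (LINT \<tau>|lborel. indicator {0<..<u} \<tau> * f \<tau>))"
      by (simp only: integral_mult_right_zero[symmetric]) (simp add: mult_ac)
  qed
  show "integrable lborel (\<lambda>u. indicator {0<..<t} u * abel_integral \<alpha> f 0 u)"
    using L(1) unfolding eq_left by simp
  have "(LINT \<tau>|lborel. indicator {0<..<t} \<tau> * (LINT u|lborel. indicator {\<tau><..<t} u * (u - \<tau>) powr (-\<alpha>)) * f \<tau>)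
      = (LINT \<tau>|lborel. indicator {0<..<t} \<tau> * (LINT u|lborel. indicator {\<tau><..<t} u * (t - u) powr (-\<alpha>)) * f \<tau>)"
    using Ioo_powr_kernel_left(2)[OF assms(1)] Ioo_powr_kernel_right(2)[OF assms(1)]
    by (intro Bochner_Integration.integral_cong) (auto simp: indicator_def)
  then show "(LINT u|lborel. indicator {0<..<t} u * abel_integral \<alpha> f 0 u)
       = abel_integral \<alpha> (\<lambda>\<sigma>. LINT \<tau>|lborel. indicator {0<..<\<sigma>} \<tau> * f \<tau>) 0 t"
    using L(2) R(2) eq_left eq_right by simp
qed

lemma integrable_abel_integrand:
  fixes f :: "real \<Rightarrow> real"
  assumes "\<alpha> < 1" "continuous_on {0..T} f" "0 \<le> a" "a \<le> b" "b \<le> T"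
  shows "integrable lborel (\<lambda>\<tau>. indicator {a<..<b} \<tau> * ((b - \<tau>) powr (-\<alpha>) * f \<tau>))"
proof -
  obtain C where C: "\<And>x. x \<in> {0..T} \<Longrightarrow> \<bar>f x\<bar> \<le> C"
    using compact_imp_bounded[OF compact_continuous_image[OF assms(2) compact_Icc]]
    unfolding bounded_iff by (auto simp: real_norm_def) (meson atLeastAtMost_iff)
  have eq: "(\<lambda>\<tau>. indicator {a<..<b} \<tau> * ((b - \<tau>) powr (-\<alpha>) * f \<tau>))
      = (\<lambda>\<tau>. (indicator {a<..<b} \<tau> * (b - \<tau>) powr (-\<alpha>)) * (indicator {0..T} \<tau> *\<^sub>R f \<tau>))"
    using assms by (auto simp: indicator_def fun_eq_iff)
  note kernel = Ioo_powr_kernel_right(1)[OF assms(1,4)]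
  show ?thesis
    unfolding eq
  proof (rule Bochner_Integration.integrable_bound[where f="\<lambda>\<tau>. C * (indicator {a<..<b} \<tau> * (b - \<tau>) powr (-\<alpha>))"])
    show "integrable lborel (\<lambda>\<tau>. C * (indicator {a<..<b} \<tau> * (b - \<tau>) powr (-\<alpha>)))"
      using kernel by simp
    have "(\<lambda>x. indicator {0..T} x *\<^sub>R f x) \<in> borel_measurable borel"
      using assms(2) by (intro borel_measurable_continuous_on_indicator) auto
    then show "(\<lambda>\<tau>. (indicator {a<..<b} \<tau> * (b - \<tau>) powr (-\<alpha>)) * (indicator {0..T} \<tau> *\<^sub>R f \<tau>)) \<in> borel_measurable lborel"
      using kernel by (intro borel_measurable_times) (auto dest: borel_measurable_integrable)
    show "AE \<tau> in lborel. norm (indicator {a<..<b} \<tau> * (b - \<tau>) powr (-\<alpha>) * (indicator {0..T} \<tau> *\<^sub>R f \<tau>))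
        \<le> norm (C * (indicator {a<..<b} \<tau> * (b - \<tau>) powr (-\<alpha>)))"
    proof (intro AE_I2)
      fix \<tau>
      show "norm (indicator {a<..<b} \<tau> * (b - \<tau>) powr (-\<alpha>) * (indicator {0..T} \<tau> *\<^sub>R f \<tau>))
        \<le> norm (C * (indicator {a<..<b} \<tau> * (b - \<tau>) powr (-\<alpha>)))"
      proof (cases "\<tau> \<in> {a<..<b}")
        case True
        then have "\<tau> \<in> {0..T}" "\<bar>f \<tau>\<bar> \<le> \<bar>C\<bar>"
          using assms C[of \<tau>] by auto
        then show ?thesis
          using True by (simp add: abs_mult mult.commute mult_left_mono)
      qed simp
    qed
  qed
qed

lemma abel_integral_le_const:
  fixes f :: "real \<Rightarrow> real"
  assumes "\<alpha> < 1" "continuous_on {0..T} f" "0 \<le> a" "a \<le> b" "b \<le> T"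
    and le: "\<And>\<tau>. a < \<tau> \<Longrightarrow> \<tau> < b \<Longrightarrow> f \<tau> \<le> m"
  shows "abel_integral \<alpha> f a b \<le> m * ((b - a) powr (1-\<alpha>) / (1-\<alpha>))"
proof -
  note kernel = Ioo_powr_kernel_right[OF assms(1,4)]
  have "abel_integral \<alpha> f a b \<le> (LINT \<tau>|lborel. m * (indicator {a<..<b} \<tau> * (b - \<tau>) powr (-\<alpha>)))"
    unfolding abel_integral_def
  proof (rule integral_mono)
    show "integrable lborel (\<lambda>\<tau>. indicator {a<..<b} \<tau> * ((b - \<tau>) powr (-\<alpha>) * f \<tau>))"
      using integrable_abel_integrand[OF assms(1-5)] .
    show "integrable lborel (\<lambda>\<tau>. m * (indicator {a<..<b} \<tau> * (b - \<tau>) powr (-\<alpha>)))"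
      using kernel(1) by simp
    fix \<tau>
    show "indicator {a<..<b} \<tau> * ((b - \<tau>) powr (-\<alpha>) * f \<tau>) \<le> m * (indicator {a<..<b} \<tau> * (b - \<tau>) powr (-\<alpha>))"
      using le[of \<tau>] by (cases "\<tau> \<in> {a<..<b}") (simp_all add: mult.commute mult_left_mono)
  qed
  also have "\<dots> = m * ((b - a) powr (1-\<alpha>) / (1-\<alpha>))"
    using kernel(2) by simp
  finally show ?thesis .
qed

text \<open>On \<open>(0,s)\<close> the kernel \<open>(s-\<tau>)\<^sup>-\<^sup>\<alpha>\<close> dominates \<open>(t-\<tau>)\<^sup>-\<^sup>\<alpha>\<close>, and \<open>f \<le> f t\<close>; after adding
  \<open>f t\<close> times the difference of the two kernels, the inequality holds pointwise.\<close>
lemma abel_kernel_le_at_maximum: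
  fixes f :: "real \<Rightarrow> real"
  assumes "0 \<le> \<alpha>" "0 \<le> s" "s \<le> t" "\<tau> \<noteq> s" and max: "\<And>\<sigma>. 0 \<le> \<sigma> \<Longrightarrow> \<sigma> \<le> t \<Longrightarrow> f \<sigma> \<le> f t"
  shows "f t * (indicator {0<..<t} \<tau> * (t - \<tau>) powr (-\<alpha>)) - f t * (indicator {0<..<s} \<tau> * (s - \<tau>) powr (-\<alpha>))
    \<le> indicator {0<..<t} \<tau> * ((t - \<tau>) powr (-\<alpha>) * f \<tau>)
      + indicator {s<..<t} \<tau> * ((t - \<tau>) powr (-\<alpha>) * (f t - f \<tau>))
      - indicator {0<..<s} \<tau> * ((s - \<tau>) powr (-\<alpha>) * f \<tau>)"
proof -
  consider "\<tau> \<le> 0 \<or> t \<le> \<tau>" | "0 < \<tau>" "\<tau> < s" | "s < \<tau>" "\<tau> < t"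
    using assms by linarith
  then show ?thesis
  proof cases
    case 1
    then show ?thesis using assms by (auto simp: indicator_def)
  next
    case 2
    have "(t - \<tau>) powr (-\<alpha>) \<le> (s - \<tau>) powr (-\<alpha>)"
      using 2 assms by (intro powr_mono2') auto
    moreover have "f \<tau> \<le> f t"
      using 2 assms by (intro max) auto
    ultimately have "0 \<le> ((s - \<tau>) powr (-\<alpha>) - (t - \<tau>) powr (-\<alpha>)) * (f t - f \<tau>)"
      by (intro mult_nonneg_nonneg) auto
    then show ?thesis
      using 2 assms by (simp add: indicator_def algebra_simps)
  next
    case 3
    then show ?thesis using assms by (simp add: indicator_def algebra_simps)
  qed
qed

lemma abel_integral_at_maximum:
  fixes f :: "real \<Rightarrow> real"
  assumes "0 \<le> \<alpha>" "\<alpha> < 1" "continuous_on {0..T} f" "0 \<le> s" "s \<le> t" "t \<le> T"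
    and "0 \<le> f t" and max: "\<And>\<tau>. 0 \<le> \<tau> \<Longrightarrow> \<tau> \<le> t \<Longrightarrow> f \<tau> \<le> f t"
  shows "abel_integral \<alpha> f 0 s - abel_integral \<alpha> f 0 t \<le> abel_integral \<alpha> (\<lambda>\<tau>. f t - f \<tau>) s t"
proof -
  have gap_cont: "continuous_on {0..T} (\<lambda>\<tau>. f t - f \<tau>)"
    using assms(3) by (intro continuous_intros)
  note int_t = integrable_abel_integrand[OF assms(2,3), of 0 t]
  note int_s = integrable_abel_integrand[OF assms(2,3), of 0 s]
  note int_gap = integrable_abel_integrand[OF assms(2) gap_cont, of s t]
  note kernel_t = Ioo_powr_kernel_right[OF assms(2), of 0 t]
  note kernel_s = Ioo_powr_kernel_right[OF assms(2), of 0 s]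
  have "s powr (1-\<alpha>) / (1-\<alpha>) \<le> t powr (1-\<alpha>) / (1-\<alpha>)"
    using assms by (intro divide_right_mono powr_mono2) auto
  then have "f t * (s powr (1-\<alpha>) / (1-\<alpha>)) \<le> f t * (t powr (1-\<alpha>) / (1-\<alpha>))"
    using assms(7) by (rule mult_left_mono)
  then have "0 \<le> f t * (t powr (1-\<alpha>) / (1-\<alpha>)) - f t * (s powr (1-\<alpha>) / (1-\<alpha>))"
    by linarith
  also have "\<dots> = (LINT \<tau>|lborel. f t * (indicator {0<..<t} \<tau> * (t - \<tau>) powr (-\<alpha>))
          - f t * (indicator {0<..<s} \<tau> * (s - \<tau>) powr (-\<alpha>)))"
    using kernel_t kernel_s assms by simp
  also have "\<dots> \<le> (LINT \<tau>|lborel. indicator {0<..<t} \<tau> * ((t - \<tau>) powr (-\<alpha>) * f \<tau>)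
          + indicator {s<..<t} \<tau> * ((t - \<tau>) powr (-\<alpha>) * (f t - f \<tau>))
          - indicator {0<..<s} \<tau> * ((s - \<tau>) powr (-\<alpha>) * f \<tau>))"
  proof (rule integral_mono_AE)
    show "integrable lborel (\<lambda>\<tau>. f t * (indicator {0<..<t} \<tau> * (t - \<tau>) powr (-\<alpha>))
          - f t * (indicator {0<..<s} \<tau> * (s - \<tau>) powr (-\<alpha>)))"
      using kernel_t kernel_s assms by simp
    show "integrable lborel (\<lambda>\<tau>. indicator {0<..<t} \<tau> * ((t - \<tau>) powr (-\<alpha>) * f \<tau>)
          + indicator {s<..<t} \<tau> * ((t - \<tau>) powr (-\<alpha>) * (f t - f \<tau>))
          - indicator {0<..<s} \<tau> * ((s - \<tau>) powr (-\<alpha>) * f \<tau>))"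
      using int_t int_s int_gap assms by simp
    show "AE \<tau> in lborel. f t * (indicator {0<..<t} \<tau> * (t - \<tau>) powr (-\<alpha>))
          - f t * (indicator {0<..<s} \<tau> * (s - \<tau>) powr (-\<alpha>))
        \<le> indicator {0<..<t} \<tau> * ((t - \<tau>) powr (-\<alpha>) * f \<tau>)
          + indicator {s<..<t} \<tau> * ((t - \<tau>) powr (-\<alpha>) * (f t - f \<tau>))
          - indicator {0<..<s} \<tau> * ((s - \<tau>) powr (-\<alpha>) * f \<tau>)"
      using AE_lborel_singleton[of s]
      by eventually_elim (use assms in \<open>auto intro!: abel_kernel_le_at_maximum\<close>)
  qed
  also have "\<dots> = abel_integral \<alpha> f 0 t + abel_integral \<alpha> (\<lambda>\<tau>. f t - f \<tau>) s t - abel_integral \<alpha> f 0 s"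
    using int_t int_s int_gap assms unfolding abel_integral_def by simp
  finally show ?thesis
    by linarith
qed

lemma interval_integral_from_0_eq_Ioo:
  fixes f :: "real \<Rightarrow> real" and t :: real
  assumes "0 \<le> t"
  shows "(LBINT x=(0::ereal)..t. f x) = (LINT x|lborel. indicator {0<..<t} x * f x)"
proof -
  have "einterval 0 (ereal t) = {0<..<t}"
    by (metis einterval_eq_Icc zero_ereal_def)
  then show ?thesis
    using assms by (simp add: interval_lebesgue_integral_le_eq set_lebesgue_integral_def)
qed

lemma caputo_eq_abel_integral:
  assumes "0 \<le> t"
  shows "caputo \<alpha> g t = abel_integral \<alpha> g 0 t / Gamma (1 - \<alpha>)"
  unfolding caputo_def abel_integral_def interval_integral_from_0_eq_Ioo[OF assms] by simp

lemma H1_integrable_deriv: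
  assumes "H1_with_deriv T w g"
  shows "integrable lborel (\<lambda>x. indicator {0..T} x * g x)"
proof (rule Bochner_Integration.integrable_bound[where f="\<lambda>x. indicator {0..T} x + indicator {0..T} x * (g x)\<^sup>2"])
  have "set_integrable lborel {0..T} (\<lambda>t. (g t)\<^sup>2)"
    using assms unfolding H1_with_deriv_def by blast
  then show "integrable lborel (\<lambda>x. indicator {0..T} x + indicator {0..T} x * (g x)\<^sup>2)"
    unfolding set_integrable_def
    by (intro Bochner_Integration.integrable_add integrable_real_indicator) (auto simp: emeasure_lborel_Icc_eq)
  have "set_borel_measurable lborel {0..T} g"
    using assms unfolding H1_with_deriv_def by blast
  then show "(\<lambda>x. indicator {0..T} x * g x) \<in> borel_measurable lborel"
    unfolding set_borel_measurable_def by simp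
  have "\<bar>y\<bar> \<le> 1 + y\<^sup>2" for y :: real
    using sum_squares_ge_zero[of "\<bar>y\<bar> - 1" 0] by (simp add: power2_eq_square algebra_simps)
  then show "AE x in lborel. norm (indicator {0..T} x * g x) \<le> norm (indicator {0..T} x + indicator {0..T} x * (g x)\<^sup>2)"
    by (intro AE_I2) (simp add: indicator_def)
qed

lemma H1_integral_deriv:
  assumes "H1_with_deriv T w g" "t \<in> {0..T}"
  shows "(LINT x|lborel. indicator {0<..<t} x * (indicator {0..T} x * g x)) = w t - w 0"
proof -
  have "0 \<le> t"
    using assms(2) by simp
  have "(LINT x|lborel. indicator {0<..<t} x * (indicator {0..T} x * g x)) = (LBINT s=0..t. g s)"
    unfolding interval_integral_from_0_eq_Ioo[OF \<open>0 \<le> t\<close>] using assms(2)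
    by (intro Bochner_Integration.integral_cong) (auto simp: indicator_def)
  also have "\<dots> = w t - w 0"
    using assms unfolding H1_with_deriv_def by fastforce
  finally show ?thesis .
qed

lemma H1_continuous:
  assumes "H1_with_deriv T w g"
  shows "continuous_on {0..T} w"
proof -
  define g' where "g' x = indicator {0..T} x * g x" for x
  have g'_int: "integrable lborel g'"
    unfolding g'_def using H1_integrable_deriv[OF assms] .
  have set_int: "set_integrable lborel {0..t} g'" for t
    using g'_int unfolding set_integrable_def by (intro integrable_mult_indicator) auto
  have primitive_cont: "continuous_on {0..T} (\<lambda>t. w 0 + integral {0..t} g')"
    using set_borel_integral_eq_integral(1)[OF set_int]
    by (intro continuous_intros indefinite_integral_continuous_1)
  have primitive_eq: "w 0 + integral {0..t} g' = w t" if "t \<in> {0..T}" for t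
    using H1_integral_deriv[OF assms that, folded g'_def] Ioo_integral_eq_integral(2)[OF set_int[of t]] by linarith
  show ?thesis
    by (rule continuous_on_cong[THEN iffD1, OF refl primitive_eq primitive_cont])
qed

text \<open>With \<open>P = p0/\<Gamma>(1-\<alpha>)\<close>, \<open>lhs_primitive \<alpha> P lam w t\<close> is \<open>w(0)\<close> plus the integral over \<open>(0,t)\<close>
  of the left-hand side \<open>w' + p0 \<partial>\<^sub>t\<^sup>\<alpha> w + lam w\<close> of the inequality.\<close>
definition lhs_primitive :: "real \<Rightarrow> real \<Rightarrow> real \<Rightarrow> (real \<Rightarrow> real) \<Rightarrow> real \<Rightarrow> real" where
  "lhs_primitive \<alpha> P lam w t = w t + P * abel_integral \<alpha> (\<lambda>\<sigma>. w \<sigma> - w 0) 0 t + lam * integral {0..t} w"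

lemma H1_lhs_primitive_eq_integral:
  fixes \<alpha> P lam T t :: real and w g :: "real \<Rightarrow> real"
  assumes "\<alpha> < 1" and H1: "H1_with_deriv T w g" and t: "t \<in> {0..T}"
  shows "integrable lborel (\<lambda>u. indicator {0<..<t} u * (indicator {0..T} u * g u
      + P * abel_integral \<alpha> (\<lambda>x. indicator {0..T} x * g x) 0 u + lam * w u))"
    and "lhs_primitive \<alpha> P lam w t = w 0 + (LINT u|lborel. indicator {0<..<t} u * (indicator {0..T} u * g u
      + P * abel_integral \<alpha> (\<lambda>x. indicator {0..T} x * g x) 0 u + lam * w u))"
proof -
  define g' where "g' = (\<lambda>x. indicator {0..T} x * g x)"
  have g'_int: "integrable lborel g'"
    unfolding g'_def using H1_integrable_deriv[OF H1] .
  then have [measurable]: "g' \<in> borel_measurable lborel"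
    by (rule borel_measurable_integrable)
  have "0 \<le> t"
    using t by simp
  have int_g': "integrable lborel (\<lambda>u. indicator {0<..<t} u * g' u)"
    using integrable_mult_indicator[OF _ g'_int, of "{0<..<t}"] by simp
  have int_g'_eq: "(LINT u|lborel. indicator {0<..<t} u * g' u) = w t - w 0"
    unfolding g'_def using H1_integral_deriv[OF H1 t] .
  note abel = integral_abel_integral[OF assms(1) \<open>0 \<le> t\<close> _ g'_int]
  have abel_eq: "abel_integral \<alpha> (\<lambda>\<sigma>. LINT \<tau>|lborel. indicator {0<..<\<sigma>} \<tau> * g' \<tau>) 0 t
      = abel_integral \<alpha> (\<lambda>\<sigma>. w \<sigma> - w 0) 0 t"
  proof (rule abel_integral_cong)
    fix \<sigma> assume "0 < \<sigma>" "\<sigma> < t"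
    then have "\<sigma> \<in> {0..T}"
      using t by simp
    then show "(LINT \<tau>|lborel. indicator {0<..<\<sigma>} \<tau> * g' \<tau>) = w \<sigma> - w 0"
      unfolding g'_def by (rule H1_integral_deriv[OF H1])
  qed
  have "set_integrable lborel {0..t} w"
    unfolding set_integrable_def using t
    by (intro borel_integrable_compact compact_Icc continuous_on_subset[OF H1_continuous[OF H1]]) auto
  note int_w = Ioo_integral_eq_integral[OF this]
  have split: "(\<lambda>u. indicator {0<..<t} u * (g' u + P * abel_integral \<alpha> g' 0 u + lam * w u))
      = (\<lambda>u. indicator {0<..<t} u * g' u + (P * (indicator {0<..<t} u * abel_integral \<alpha> g' 0 u)
          + lam * (indicator {0<..<t} u * w u)))"
    by (auto simp: fun_eq_iff algebra_simps)
  have "integrable lborel (\<lambda>u. indicator {0<..<t} u * (g' u + P * abel_integral \<alpha> g' 0 u + lam * w u))"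
    unfolding split using int_g' abel(1) int_w(1) by simp
  moreover have "lhs_primitive \<alpha> P lam w t
      = w 0 + (LINT u|lborel. indicator {0<..<t} u * (g' u + P * abel_integral \<alpha> g' 0 u + lam * w u))"
    unfolding split lhs_primitive_def using int_g' abel int_w int_g'_eq abel_eq by simp
  ultimately show "integrable lborel (\<lambda>u. indicator {0<..<t} u * (indicator {0..T} u * g u
      + P * abel_integral \<alpha> (\<lambda>x. indicator {0..T} x * g x) 0 u + lam * w u))"
    and "lhs_primitive \<alpha> P lam w t = w 0 + (LINT u|lborel. indicator {0<..<t} u * (indicator {0..T} u * g u
      + P * abel_integral \<alpha> (\<lambda>x. indicator {0..T} x * g x) 0 u + lam * w u))"
    unfolding g'_def by simp_all
qed

lemma H1_lhs_primitive_antimono: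
  fixes \<alpha> lam p0 T :: real and w g :: "real \<Rightarrow> real"
  assumes "\<alpha> < 1" and H1: "H1_with_deriv T w g"
    and ineq: "AE t in lborel. t \<in> {0<..<T} \<longrightarrow> g t + p0 * caputo \<alpha> g t + lam * w t \<le> 0"
    and "0 \<le> s" "s \<le> t" "t \<le> T"
  shows "lhs_primitive \<alpha> (p0 / Gamma (1 - \<alpha>)) lam w t \<le> lhs_primitive \<alpha> (p0 / Gamma (1 - \<alpha>)) lam w s"
proof -
  define P where "P = p0 / Gamma (1 - \<alpha>)"
  define Q where "Q u = indicator {0..T} u * g u
      + P * abel_integral \<alpha> (\<lambda>x. indicator {0..T} x * g x) 0 u + lam * w u" for u
  have Q_int: "integrable lborel (\<lambda>u. indicator {0<..<r} u * Q u)"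
    and Q_eq: "lhs_primitive \<alpha> P lam w r = w 0 + (LINT u|lborel. indicator {0<..<r} u * Q u)"
    if "r \<in> {0..T}" for r
    unfolding Q_def using H1_lhs_primitive_eq_integral[OF assms(1) H1 that] by blast+
  have "AE u in lborel. indicator {0<..<t} u * Q u \<le> indicator {0<..<s} u * Q u"
    using ineq
  proof eventually_elim
    case (elim u)
    show ?case
    proof (cases "u \<in> {0<..<t} - {0<..<s}")
      case True
      then have u: "0 < u" "u < T"
        using assms by auto
      have "abel_integral \<alpha> (\<lambda>x. indicator {0..T} x * g x) 0 u = abel_integral \<alpha> g 0 u"
        using u by (intro abel_integral_cong) simp
      then have "Q u = g u + p0 * caputo \<alpha> g u + lam * w u"
        using u by (simp add: Q_def P_def caputo_eq_abel_integral)
      then show ?thesis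
        using True u elim by simp
    qed (use assms in \<open>auto simp: indicator_def\<close>)
  qed
  then have "(LINT u|lborel. indicator {0<..<t} u * Q u) \<le> (LINT u|lborel. indicator {0<..<s} u * Q u)"
    using assms by (intro integral_mono_AE Q_int) auto
  then show ?thesis
    using assms by (simp add: Q_eq P_def[symmetric])
qed

lemma lhs_primitive_at_maximum:
  fixes w :: "real \<Rightarrow> real"
  assumes "0 \<le> \<alpha>" "\<alpha> < 1" "0 \<le> P" and w_cont: "continuous_on {0..T} w"
    and antimono: "\<And>s t. 0 \<le> s \<Longrightarrow> s \<le> t \<Longrightarrow> t \<le> T \<Longrightarrow> lhs_primitive \<alpha> P lam w t \<le> lhs_primitive \<alpha> P lam w s"
    and "0 \<le> s" "s \<le> t" "t \<le> T" and max: "\<And>\<tau>. 0 \<le> \<tau> \<Longrightarrow> \<tau> \<le> t \<Longrightarrow> w \<tau> \<le> w t"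
  shows "(w t - w s) + lam * integral {s..t} w \<le> P * abel_integral \<alpha> (\<lambda>\<tau>. w t - w \<tau>) s t"
proof -
  have "w integrable_on {0..t}"
    using assms by (intro integrable_continuous_interval continuous_on_subset[OF w_cont]) auto
  then have combine: "integral {0..s} w + integral {s..t} w = integral {0..t} w"
    using assms by (intro Henstock_Kurzweil_Integration.integral_combine) auto
  have "lam * integral {0..t} w = lam * integral {0..s} w + lam * integral {s..t} w"
    unfolding combine[symmetric] by (rule distrib_left)
  moreover have "abel_integral \<alpha> (\<lambda>\<sigma>. w \<sigma> - w 0) 0 s - abel_integral \<alpha> (\<lambda>\<sigma>. w \<sigma> - w 0) 0 t
      \<le> abel_integral \<alpha> (\<lambda>\<tau>. w t - w \<tau>) s t"
    using abel_integral_at_maximum[of \<alpha> T "\<lambda>\<sigma>. w \<sigma> - w 0" s t] w_cont assms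
    by (simp add: continuous_on_diff)
  then have "P * (abel_integral \<alpha> (\<lambda>\<sigma>. w \<sigma> - w 0) 0 s - abel_integral \<alpha> (\<lambda>\<sigma>. w \<sigma> - w 0) 0 t)
      \<le> P * abel_integral \<alpha> (\<lambda>\<tau>. w t - w \<tau>) s t"
    using assms(3) by (rule mult_left_mono)
  moreover have "lhs_primitive \<alpha> P lam w t \<le> lhs_primitive \<alpha> P lam w s"
    using assms by (intro antimono) auto
  ultimately show ?thesis
    unfolding lhs_primitive_def right_diff_distrib by linarith
qed

lemma lhs_primitive_deficit_le:
  fixes w :: "real \<Rightarrow> real"
  assumes "0 \<le> \<alpha>" "\<alpha> < 1" "0 \<le> P" "0 \<le> lam" and w_cont: "continuous_on {0..T} w"
    and antimono: "\<And>s t. 0 \<le> s \<Longrightarrow> s \<le> t \<Longrightarrow> t \<le> T \<Longrightarrow> lhs_primitive \<alpha> P lam w t \<le> lhs_primitive \<alpha> P lam w s"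
    and "t \<le> T" and max: "\<And>\<tau>. 0 \<le> \<tau> \<Longrightarrow> \<tau> \<le> t \<Longrightarrow> w \<tau> \<le> w t"
    and "0 \<le> s" "s \<le> t" "t - s \<le> \<delta>" and nonneg: "\<And>\<tau>. s \<le> \<tau> \<Longrightarrow> \<tau> \<le> t \<Longrightarrow> 0 \<le> w \<tau>"
    and "0 \<le> m" and deficit: "\<And>\<tau>. s < \<tau> \<Longrightarrow> \<tau> < t \<Longrightarrow> w t - w \<tau> \<le> m"
  shows "w t - w s \<le> P * (m * (\<delta> powr (1-\<alpha>) / (1-\<alpha>)))"
proof -
  have gap_cont: "continuous_on {0..T} (\<lambda>\<tau>. w t - w \<tau>)"
    using w_cont by (intro continuous_intros)
  have "w integrable_on {s..t}"
    using assms by (intro integrable_continuous_interval continuous_on_subset[OF w_cont]) auto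
  then have "0 \<le> integral {s..t} w"
    by (rule Henstock_Kurzweil_Integration.integral_nonneg) (simp add: nonneg)
  then have "w t - w s \<le> P * abel_integral \<alpha> (\<lambda>\<tau>. w t - w \<tau>) s t"
    using lhs_primitive_at_maximum[OF assms(1-3) w_cont antimono \<open>0 \<le> s\<close> \<open>s \<le> t\<close> \<open>t \<le> T\<close> max]
      mult_nonneg_nonneg[OF assms(4)] by fastforce
  also have "\<dots> \<le> P * (m * (\<delta> powr (1-\<alpha>) / (1-\<alpha>)))"
  proof (rule mult_left_mono[OF _ assms(3)])
    have "abel_integral \<alpha> (\<lambda>\<tau>. w t - w \<tau>) s t \<le> m * ((t - s) powr (1-\<alpha>) / (1-\<alpha>))"
      using abel_integral_le_const[OF assms(2) gap_cont \<open>0 \<le> s\<close> \<open>s \<le> t\<close> \<open>t \<le> T\<close> deficit] .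
    also have "\<dots> \<le> m * (\<delta> powr (1-\<alpha>) / (1-\<alpha>))"
      using assms by (intro mult_left_mono divide_right_mono powr_mono2) auto
    finally show "abel_integral \<alpha> (\<lambda>\<tau>. w t - w \<tau>) s t \<le> m * (\<delta> powr (1-\<alpha>) / (1-\<alpha>))" .
  qed
  finally show ?thesis .
qed

lemma lhs_primitive_flat_before_maximum:
  fixes w :: "real \<Rightarrow> real"
  assumes "0 \<le> \<alpha>" "\<alpha> < 1" "0 \<le> P" "0 \<le> lam" and w_cont: "continuous_on {0..T} w"
    and antimono: "\<And>s t. 0 \<le> s \<Longrightarrow> s \<le> t \<Longrightarrow> t \<le> T \<Longrightarrow> lhs_primitive \<alpha> P lam w t \<le> lhs_primitive \<alpha> P lam w s"
    and "t \<le> T" and max: "\<And>\<tau>. 0 \<le> \<tau> \<Longrightarrow> \<tau> \<le> t \<Longrightarrow> w \<tau> \<le> w t"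
    and "0 \<le> \<delta>" "\<delta> \<le> t" and nonneg: "\<And>\<tau>. t - \<delta> \<le> \<tau> \<Longrightarrow> \<tau> \<le> t \<Longrightarrow> 0 \<le> w \<tau>"
    and small: "P * (\<delta> powr (1-\<alpha>) / (1-\<alpha>)) < 1"
    and tau: "t - \<delta> \<le> \<tau>" "\<tau> \<le> t"
  shows "w \<tau> = w t"
proof -
  have "continuous_on {t - \<delta>..t} (\<lambda>\<sigma>. w t - w \<sigma>)"
    using assms by (intro continuous_intros continuous_on_subset[OF w_cont]) auto
  moreover have "{t - \<delta>..t} \<noteq> {}"
    using assms by simp
  ultimately obtain s0 where s0: "s0 \<in> {t - \<delta>..t}" and s0_max: "\<forall>\<sigma>\<in>{t - \<delta>..t}. w t - w \<sigma> \<le> w t - w s0"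
    using continuous_attains_sup[OF compact_Icc] by blast
  define m where "m = w t - w s0"
  have "0 \<le> m"
    using s0_max assms unfolding m_def by simp
  have "0 \<le> s0" "s0 \<le> t" "t - s0 \<le> \<delta>"
    using s0 assms by auto
  moreover have "0 \<le> w \<sigma>" if "s0 \<le> \<sigma>" "\<sigma> \<le> t" for \<sigma>
    using that s0 by (intro nonneg) auto
  moreover have "w t - w \<sigma> \<le> m" if "s0 < \<sigma>" "\<sigma> < t" for \<sigma>
    using that s0 s0_max unfolding m_def by auto
  ultimately have "m \<le> P * (m * (\<delta> powr (1-\<alpha>) / (1-\<alpha>)))"
    unfolding m_def using \<open>0 \<le> m\<close>[unfolded m_def]
    by (intro lhs_primitive_deficit_le[OF assms(1-4) w_cont antimono \<open>t \<le> T\<close> max])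
  also have "\<dots> = m * (P * (\<delta> powr (1-\<alpha>) / (1-\<alpha>)))"
    by (simp add: mult_ac)
  finally have "m \<le> m * (P * (\<delta> powr (1-\<alpha>) / (1-\<alpha>)))" .
  have "\<not> 0 < m"
  proof
    assume "0 < m"
    from mult_strict_left_mono[OF small this] \<open>m \<le> m * (P * (\<delta> powr (1-\<alpha>) / (1-\<alpha>)))\<close>
    show False
      by simp
  qed
  moreover have "w t - w \<tau> \<le> m"
    using s0_max tau unfolding m_def by simp
  moreover have "w \<tau> \<le> w t"
    using tau assms by (intro max) auto
  ultimately show "w \<tau> = w t"
    by linarith
qed

lemma eventually_kernel_mass_less_1:
  fixes \<alpha> P :: real
  assumes "\<alpha> < 1"
  shows "\<forall>\<^sub>F \<delta> in at_right 0. P * (\<delta> powr (1-\<alpha>) / (1-\<alpha>)) < 1"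
proof -
  have "((\<lambda>x::real. x powr (1-\<alpha>)) \<longlongrightarrow> 0) (at_right 0)"
    by (rule tendsto_zero_powrI[where b="1-\<alpha>"])
      (use assms in \<open>auto simp: eventually_at_right_field intro!: exI[of _ 1] tendsto_ident_at\<close>)
  then have "((\<lambda>x. P * (x powr (1-\<alpha>) / (1-\<alpha>))) \<longlongrightarrow> P * (0 / (1-\<alpha>))) (at_right 0)"
    by (intro tendsto_intros) (use assms in auto)
  then show ?thesis
    by (intro order_tendstoD(2)) auto
qed

lemma lhs_primitive_maximum_nonpos:
  fixes w :: "real \<Rightarrow> real"
  assumes "0 \<le> \<alpha>" "\<alpha> < 1" "0 < lam" "0 \<le> P" and w_cont: "continuous_on {0..T} w"
    and antimono: "\<And>s t. 0 \<le> s \<Longrightarrow> s \<le> t \<Longrightarrow> t \<le> T \<Longrightarrow> lhs_primitive \<alpha> P lam w t \<le> lhs_primitive \<alpha> P lam w s"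
    and "t \<le> T" and max: "\<And>\<tau>. 0 \<le> \<tau> \<Longrightarrow> \<tau> \<le> t \<Longrightarrow> w \<tau> \<le> w t"
    and "0 < \<delta>" "\<delta> \<le> t" and nonneg: "\<And>\<tau>. t - \<delta> \<le> \<tau> \<Longrightarrow> \<tau> \<le> t \<Longrightarrow> 0 \<le> w \<tau>"
    and small: "P * (\<delta> powr (1-\<alpha>) / (1-\<alpha>)) < 1"
  shows "w t \<le> 0"
proof -
  note flat = lhs_primitive_flat_before_maximum[OF assms(1,2,4) less_imp_le[OF assms(3)] w_cont antimono
      \<open>t \<le> T\<close> max less_imp_le[OF \<open>0 < \<delta>\<close>] \<open>\<delta> \<le> t\<close> nonneg small]
  have "t - \<delta> \<le> t" "0 \<le> t - \<delta>"
    using assms by auto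
  note at_max = lhs_primitive_at_maximum[OF assms(1,2,4) w_cont antimono this(2,1) \<open>t \<le> T\<close> max]
  have "abel_integral \<alpha> (\<lambda>\<tau>. w t - w \<tau>) (t - \<delta>) t = abel_integral \<alpha> (\<lambda>_. 0) (t - \<delta>) t"
  proof (rule abel_integral_cong)
    fix \<tau> assume "t - \<delta> < \<tau>" "\<tau> < t"
    then have "w \<tau> = w t"
      by (intro flat) auto
    then show "w t - w \<tau> = 0"
      by simp
  qed
  moreover have "integral {t - \<delta>..t} w = integral {t - \<delta>..t} (\<lambda>_. w t)"
    by (intro Henstock_Kurzweil_Integration.integral_cong flat) auto
  moreover have "w (t - \<delta>) = w t"
    using assms by (intro flat) auto
  ultimately have "lam * (\<delta> * w t) \<le> 0"
    using at_max assms by (simp add: abel_integral_def)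
  then show "w t \<le> 0"
    using assms by (simp add: mult_le_0_iff)
qed

lemma nonpos_of_lhs_primitive_antimono:
  fixes w :: "real \<Rightarrow> real"
  assumes "0 \<le> \<alpha>" "\<alpha> < 1" "0 < lam" "0 \<le> P" and w_cont: "continuous_on {0..T} w"
    and antimono: "\<And>s t. 0 \<le> s \<Longrightarrow> s \<le> t \<Longrightarrow> t \<le> T \<Longrightarrow> lhs_primitive \<alpha> P lam w t \<le> lhs_primitive \<alpha> P lam w s"
    and "w 0 \<le> 0" and t: "t \<in> {0..T}"
  shows "w t \<le> 0"
proof (rule ccontr)
  assume "\<not> w t \<le> 0"
  obtain t1 where t1: "t1 \<in> {0..T}" and t1_max: "\<And>\<tau>. \<tau> \<in> {0..T} \<Longrightarrow> w \<tau> \<le> w t1"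
    using continuous_attains_sup[OF compact_Icc _ w_cont] t by auto
  have "w t1 > 0"
    using t1_max[OF t] \<open>\<not> w t \<le> 0\<close> by linarith
  then have "t1 > 0"
    using t1 assms(7) by (cases "t1 = 0") auto
  obtain e where "e > 0" and e: "\<And>\<tau>. \<tau> \<in> {0..T} \<Longrightarrow> \<bar>\<tau> - t1\<bar> < e \<Longrightarrow> w \<tau> > 0"
  proof -
    obtain e where "e > 0" "\<forall>\<tau>\<in>{0..T}. dist \<tau> t1 < e \<longrightarrow> dist (w \<tau>) (w t1) < w t1"
      using w_cont t1 \<open>w t1 > 0\<close> unfolding continuous_on_iff by blast
    then show ?thesis
      using that[of e] unfolding dist_real_def by fastforce
  qed
  obtain b where "b > 0" and b: "\<And>y. 0 < y \<Longrightarrow> y < b \<Longrightarrow> P * (y powr (1-\<alpha>) / (1-\<alpha>)) < 1"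
    using eventually_kernel_mass_less_1[OF assms(2), of P] unfolding eventually_at_right_field by auto
  define \<delta> where "\<delta> = min b (min e t1) / 2"
  have \<delta>: "0 < \<delta>" "\<delta> \<le> t1" "\<delta> < e" "\<delta> < b"
    using \<open>b > 0\<close> \<open>e > 0\<close> \<open>t1 > 0\<close> by (auto simp: \<delta>_def)
  have "w t1 \<le> 0"
  proof (rule lhs_primitive_maximum_nonpos[OF assms(1-4) w_cont antimono _ _ \<delta>(1,2) _ b[OF \<delta>(1,4)]])
    show "t1 \<le> T"
      using t1 by simp
    show "w \<tau> \<le> w t1" if "0 \<le> \<tau>" "\<tau> \<le> t1" for \<tau>
      using that t1 by (intro t1_max) auto
    show "0 \<le> w \<tau>" if "t1 - \<delta> \<le> \<tau>" "\<tau> \<le> t1" for \<tau>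
      using that t1 \<delta> e[of \<tau>] by auto
  qed
  with \<open>w t1 > 0\<close> show False
    by linarith
qed

theorem lemma4p2:
  fixes \<alpha> lam p0 T :: real and w g :: "real \<Rightarrow> real"
  assumes "0 < \<alpha>" "\<alpha> < 1" "lam > 0" "p0 \<ge> 0" "T > 0"
    and "H1_with_deriv T w g"
    and "AE t in lborel. t \<in> {0<..<T} \<longrightarrow> g t + p0 * caputo \<alpha> g t + lam * w t \<le> 0"
    and "w 0 \<le> 0"
  shows "\<forall>t\<in>{0<..T}. w t \<le> 0"
proof -
  define P where "P = p0 / Gamma (1 - \<alpha>)"
  have "0 \<le> P"
    unfolding P_def using assms by (intro divide_nonneg_pos Gamma_real_pos) auto
  have "lhs_primitive \<alpha> P lam w t \<le> lhs_primitive \<alpha> P lam w s" if "0 \<le> s" "s \<le> t" "t \<le> T" for s t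
    unfolding P_def using H1_lhs_primitive_antimono[OF assms(2,6,7) that] .
  from nonpos_of_lhs_primitive_antimono[OF _ assms(2,3) \<open>0 \<le> P\<close> H1_continuous[OF assms(6)] this assms(8)]
  show ?thesis
    using assms(1) by auto
qed

end
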